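(* For all $x,y\in A^{\mathbb N}$, if $\mathfrak d_L(x,y)=0$, then for every $p\in\mathbb N$ there exist $i,j\in\mathbb N$ such that $x_{[i,i+p)}=y_{[j,j+p)}$.
   Context: $A$ is a finite alphabet, $x_{[i,j)}=x_i\cdots x_{j-1}$. The Levenshtein distance between finite words is $d_L(u,v)=\frac{|u|+|v|}{2}-\ell$, where $\ell$ is the length of a longest common subsequence of $u$ and $v$. The Feldman pseudo-metric is $\mathfrak d_L(x,y)=\limsup_{l\to\infty}\frac{d_L(x_{[0,l)},y_{[0,l)})}{l}$. *)

theory Defs
  imports "HOL-Analysis.Analysis" "HOL-Library.Sublist"
begin

definition factor :: "(nat \<Rightarrow> 'a) \<Rightarrow> nat \<Rightarrow> nat \<Rightarrow> 'a list" where
  "factor x i j = map x [i..<j]"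

definition lcs_len :: "'a list \<Rightarrow> 'a list \<Rightarrow> nat" where
  "lcs_len u v = Max {length w | w. subseq w u \<and> subseq w v}"

definition lev_dist :: "'a list \<Rightarrow> 'a list \<Rightarrow> real" where
  "lev_dist u v = (real (length u) + real (length v)) / 2 - real (lcs_len u v)"

definition feldman :: "(nat \<Rightarrow> 'a) \<Rightarrow> (nat \<Rightarrow> 'a) \<Rightarrow> ereal" where
  "feldman x y = limsup (\<lambda>l. ereal (lev_dist (factor x 0 l) (factor y 0 l) / real l))"

end

theory Submission
  imports Defs
begin

text \<open>Suppose x and y share no factor of length p > 0. Cut x_[0,l) into l div p blocks of
  length p. A common subsequence of x_[0,l) and y_[0,l) splits along these blocks, and no block
  can be matched completely to a contiguous piece of y_[0,l), since that piece would be a common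
  factor. So each block costs at least one unmatched letter, whence
  2 d_L(x_[0,l), y_[0,l)) \<ge> l div p, and the Feldman distance is at least 1/(4p) > 0.\<close>

definition has_common_factor :: "nat \<Rightarrow> 'a list \<Rightarrow> 'a list \<Rightarrow> bool" where
  "has_common_factor p u v \<longleftrightarrow> (\<exists>s. length s = p \<and> sublist s u \<and> sublist s v)"

lemma has_common_factor_mono:
  assumes "has_common_factor p u v" "sublist u u'" "sublist v v'"
  shows "has_common_factor p u' v'"
  using assms sublist_order.order_trans unfolding has_common_factor_def by blast

lemma blocks_le_subseq_defect:
  assumes "0 < p" "\<not> has_common_factor p u v" "subseq w u" "subseq w v"
  shows "length u div p \<le> (length u - length w) + (length v - length w)"
  using assms(2-)
proof (induction u arbitrary: v w rule: length_induct)
  case (1 u)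
  show ?case
  proof (cases "length u < p")
    case True
    then show ?thesis by simp
  next
    case False
    define a where "a = take p u"
    define b where "b = drop p u"
    have u: "u = a @ b" and la: "length a = p"
      using False by (auto simp: a_def b_def)
    obtain w1 w2 where w: "w = w1 @ w2" "subseq w1 a" "subseq w2 b"
      using "1.prems"(2) u by (metis subseq_appendE)
    obtain v1 v2 where v: "v = v1 @ v2" "subseq w1 v1" "subseq w2 v2"
      using "1.prems"(3) w(1) list_emb_appendD by blast
    have "\<not> has_common_factor p b v2"
      using "1.prems"(1) has_common_factor_mono[of p b v2 u v] u v(1) by auto
    then have blocks_b: "length b div p \<le> (length b - length w2) + (length v2 - length w2)"
      using "1.IH" u la \<open>0 < p\<close> w(3) v(3) by simp
    have "w1 \<noteq> a \<or> w1 \<noteq> v1"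
      using "1.prems"(1) u v(1) la unfolding has_common_factor_def by auto
    then have block_a: "1 \<le> (length a - length w1) + (length v1 - length w1)"
      using w(2) v(2) list_emb_length subseq_same_length by fastforce
    have "length u div p = length b div p + 1"
      using u la \<open>0 < p\<close> False by (simp add: le_div_geq)
    then show ?thesis
      using blocks_b block_a u v w list_emb_length[OF w(2)] list_emb_length[OF v(2)]
        list_emb_length[OF w(3)] list_emb_length[OF v(3)] by simp
  qed
qed

lemma lcs_len_witness: "\<exists>w. subseq w u \<and> subseq w v \<and> lcs_len u v = length w"
proof -
  define S where "S = {length w | w. subseq w u \<and> subseq w v}"
  have "finite S"
    by (rule finite_subset[of _ "{..length u}"]) (auto simp: S_def dest: list_emb_length)
  moreover have "S \<noteq> {}"
    unfolding S_def by (metis (mono_tags) empty_iff list_emb_Nil mem_Collect_eq)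
  ultimately show ?thesis
    using Max_in unfolding S_def lcs_len_def by fastforce
qed

lemma blocks_le_lev_dist:
  assumes "0 < p" "\<not> has_common_factor p u v"
  shows "real (length u div p) \<le> 2 * lev_dist u v"
proof -
  obtain w where w: "subseq w u" "subseq w v" "lcs_len u v = length w"
    using lcs_len_witness by blast
  have "length u div p \<le> (length u - length w) + (length v - length w)"
    using blocks_le_subseq_defect[OF assms w(1,2)] .
  then have "real (length u div p) \<le> real (length u) + real (length v) - 2 * real (length w)"
    using list_emb_length[OF w(1)] list_emb_length[OF w(2)] by linarith
  then show ?thesis
    unfolding lev_dist_def w(3) by (simp add: field_simps)
qed

lemma length_factor [simp]: "length (factor x i j) = j - i"
  by (simp add: factor_def)

lemma sublist_factor:
  assumes "sublist s (factor x i j)"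
  shows "\<exists>k. s = factor x k (k + length s)"
proof -
  obtain ps ss where e: "factor x i j = ps @ s @ ss"
    using assms sublist_def by blast
  have len: "s = [] \<or> i + length ps + length s \<le> j"
    using arg_cong[OF e, of length] by (cases s) auto
  have "s = take (length s) (drop (length ps) (factor x i j))"
    using e by simp
  also have "\<dots> = factor x (i + length ps) (i + length ps + length s)"
    using len by (auto simp: factor_def drop_map take_map)
  finally show ?thesis by blast
qed

lemma has_common_factor_factor:
  assumes "has_common_factor p (factor x i i') (factor y j j')"
  shows "\<exists>k l. factor x k (k + p) = factor y l (l + p)"
  using assms sublist_factor unfolding has_common_factor_def by metis

lemma div_ge_half_quotient:
  fixes l p :: nat
  assumes "0 < p" "2 * p \<le> l"
  shows "real l / (2 * real p) \<le> real (l div p)"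
proof -
  have "l < p * (l div p) + p"
    using dividend_less_times_div[OF assms(1), of l] by simp
  then have "real l < real p * real (l div p) + real p"
    by (simp only: of_nat_less_iff flip: of_nat_mult of_nat_add)
  then have "real l \<le> 2 * (real p * real (l div p))"
    using assms(2) by linarith
  then show ?thesis
    using assms(1) by (simp add: divide_le_eq mult_ac)
qed

lemma feldman_ge_if_no_common_factor:
  assumes "0 < p" and no_common: "\<forall>i j. factor x i (i + p) \<noteq> factor y j (j + p)"
  shows "ereal (1 / (4 * real p)) \<le> feldman x y"
  unfolding feldman_def
proof (rule le_Limsup)
  show "\<forall>\<^sub>F l in sequentially. ereal (1 / (4 * real p)) \<le>
      ereal (lev_dist (factor x 0 l) (factor y 0 l) / real l)"
  proof (rule eventually_sequentiallyI)
    fix l assume l: "2 * p \<le> l"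
    have "\<not> has_common_factor p (factor x 0 l) (factor y 0 l)"
      using has_common_factor_factor no_common by blast
    then have "real (l div p) \<le> 2 * lev_dist (factor x 0 l) (factor y 0 l)"
      using blocks_le_lev_dist[OF \<open>0 < p\<close>] by fastforce
    then have "real l / (4 * real p) \<le> lev_dist (factor x 0 l) (factor y 0 l)"
      using div_ge_half_quotient[OF \<open>0 < p\<close> l] by simp
    then show "ereal (1 / (4 * real p)) \<le> ereal (lev_dist (factor x 0 l) (factor y 0 l) / real l)"
      using l \<open>0 < p\<close> by (simp add: field_simps)
  qed
qed simp

theorem lemmal:
  fixes x y :: "nat \<Rightarrow> 'a::finite"
  assumes "feldman x y = 0"
  shows "\<forall>p::nat. \<exists>i j::nat. factor x i (i + p) = factor y j (j + p)"
proof (rule ccontr)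
  assume "\<not> ?thesis"
  then obtain p where no_common: "\<forall>i j. factor x i (i + p) \<noteq> factor y j (j + p)"
    by blast
  then have "0 < p"
    by (cases p) (auto simp: factor_def)
  then show False
    using feldman_ge_if_no_common_factor[OF _ no_common] assms by simp
qed

end
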